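(* Let $D$ be a chain BN on $X_1,\dots,X_n$ with all conditional probabilities in $(0,1)$, let $f(x)=x_n$, and let $D_{k,\mu}=\mu_{k,1}-\mu_{k,0}$ and $D_{k,\sigma}=\sigma_{k,1}-\sigma_{k,0}$ (signed). Then $$\sum_{S\subseteq[n]}\hat f_S=\sum_{k=1}^{n}(\mu_{k,0}+\sigma_{k,0})\prod_{\ell=k+1}^{n}(D_{\ell,\mu}+D_{\ell,\sigma}).$$
   Context: A chain BN on $X_1,\dots,X_n$ has $\operatorname{pa}(1)=\emptyset$, $\operatorname{pa}(i)=\{i-1\}$ for $i\ge2$; $\mu_{i,b}=P(X_i=1\mid X_{i-1}=b)$, $\sigma_{i,b}=\sqrt{\mu_{i,b}(1-\mu_{i,b})}$ for $i\ge2$, $b\in\{0,1\}$; for the root, $\mu_{1,0}=\mu_{1,1}=P(X_1=1)$ and $\sigma_{1,0}=\sigma_{1,1}=\sqrt{\mu_{1,0}(1-\mu_{1,0})}$. The BN-induced basis is $\phi_i(x)=(x_i-\mu_{i,x_{i-1}})/\sigma_{i,x_{i-1}}$ (root: $(x_1-\mu_{1,0})/\sigma_{1,0}$), $\phi_S=\prod_{i\in S}\phi_i$, and $\hat f_S=\mathbb{E}_D[f(X)\phi_S(X)]$. *)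

theory Defs
  imports Complex_Main "HOL-Library.FuncSet"
begin

text \<open>An assignment is a function x :: nat => nat with x i in {0,1} for i in {1..n}
  (extensional: x i = undefined outside {1..n}).
  mu i b = P(X_i = 1 | X_{i-1} = b) for i >= 2; for the root, mu 1 0 = mu 1 1 = P(X_1 = 1).\<close>

definition assignments :: "nat \<Rightarrow> (nat \<Rightarrow> nat) set" where
  "assignments n = PiE {1..n} (\<lambda>_. {0, 1})"

text \<open>Value of the parent of node i (root: we use index 0, as mu 1 0 = mu 1 1).\<close>
definition parent_val :: "(nat \<Rightarrow> nat) \<Rightarrow> nat \<Rightarrow> nat" where
  "parent_val x i = (if i = 1 then 0 else x (i - 1))"

definition chain_prob :: "nat \<Rightarrow> (nat \<Rightarrow> nat \<Rightarrow> real) \<Rightarrow> (nat \<Rightarrow> nat) \<Rightarrow> real" where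
  "chain_prob n mu x =
     (\<Prod>i\<in>{1..n}. if x i = 1 then mu i (parent_val x i) else 1 - mu i (parent_val x i))"

definition sig :: "(nat \<Rightarrow> nat \<Rightarrow> real) \<Rightarrow> nat \<Rightarrow> nat \<Rightarrow> real" where
  "sig mu i b = sqrt (mu i b * (1 - mu i b))"

definition phi :: "(nat \<Rightarrow> nat \<Rightarrow> real) \<Rightarrow> nat \<Rightarrow> (nat \<Rightarrow> nat) \<Rightarrow> real" where
  "phi mu i x = (real (x i) - mu i (parent_val x i)) / sig mu i (parent_val x i)"

definition phiS :: "(nat \<Rightarrow> nat \<Rightarrow> real) \<Rightarrow> nat set \<Rightarrow> (nat \<Rightarrow> nat) \<Rightarrow> real" where
  "phiS mu S x = (\<Prod>i\<in>S. phi mu i x)"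

definition fourier_coeff ::
  "nat \<Rightarrow> (nat \<Rightarrow> nat \<Rightarrow> real) \<Rightarrow> ((nat \<Rightarrow> nat) \<Rightarrow> real) \<Rightarrow> nat set \<Rightarrow> real" where
  "fourier_coeff n mu f S = (\<Sum>x\<in>assignments n. chain_prob n mu x * f x * phiS mu S x)"

end

theory Submission
  imports Defs
begin

text \<open>Summing the basis over all S factorises: sum_S phi_S = prod_i (1 + phi_i).
  Multiplying each conditional probability P(x_i | x_{i-1} = b) by 1 + phi_i gives a tilted
  kernel that still has total mass 1 but mean c_{i,b} = mu_{i,b} + sigma_{i,b}. The left-hand side
  is therefore the "expectation" of x_n along a chain with these kernels, and summing out
  x_n, x_{n-1}, ... one at a time turns an affine function p + q x_k into the affine function
  (p + q c_{k,0}) + q (c_{k,1} - c_{k,0}) x_{k-1} of the parent.\<close>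

lemma assignments_Suc:
  "assignments (Suc m) = (\<lambda>(a, x). x(Suc m := a)) ` ({0, 1} \<times> assignments m)"
  unfolding assignments_def
  by (metis PiE_insert_eq Suc_eq_plus1 atLeastAtMostSuc_conv le_add2)

lemma inj_on_extend_assignment:
  "inj_on (\<lambda>(a, x). x(Suc m := a)) ({0::nat, 1} \<times> assignments m)"
  unfolding assignments_def using inj_combinator[of "Suc m" "{1..m}" "\<lambda>_. {0::nat, 1}"] by simp

lemma parent_val_upd_below:
  "i \<le> Suc m \<Longrightarrow> parent_val (x(Suc m := a)) i = parent_val x i"
  by (auto simp: parent_val_def)

lemma parent_val_upd_child: "parent_val (x(Suc m := a)) (Suc (Suc m)) = a"
  by (simp add: parent_val_def)

lemma parent_val_last_in_01:
  "x \<in> assignments m \<Longrightarrow> parent_val x (Suc m) \<in> {0, 1}"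
  by (auto simp: assignments_def parent_val_def PiE_def Pi_def)

text \<open>For \<open>m = 0\<close>, \<open>h\<close> is evaluated at 0, the root convention of \<^const>\<open>parent_val\<close>.\<close>

definition chain_sum ::
  "(nat \<Rightarrow> nat \<Rightarrow> nat \<Rightarrow> real) \<Rightarrow> nat \<Rightarrow> (nat \<Rightarrow> real) \<Rightarrow> real" where
  "chain_sum F m h =
     (\<Sum>x\<in>assignments m. (\<Prod>i\<in>{1..m}. F i (parent_val x i) (x i)) * h (parent_val x (Suc m)))"

lemma chain_sum_0: "chain_sum F 0 h = h 0"
proof -
  have "assignments 0 = {\<lambda>_. undefined}" by (simp add: assignments_def)
  then show ?thesis by (simp add: chain_sum_def parent_val_def)
qed

lemma chain_sum_Suc:
  "chain_sum F (Suc m) h = chain_sum F m (\<lambda>b. \<Sum>a\<in>{0, 1}. F (Suc m) b a * h a)"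
proof -
  have "chain_sum F (Suc m) h = (\<Sum>(a, x)\<in>{0, 1} \<times> assignments m.
      (\<Prod>i\<in>{1..m}. F i (parent_val x i) (x i)) * (F (Suc m) (parent_val x (Suc m)) a * h a))"
    unfolding chain_sum_def assignments_Suc sum.reindex[OF inj_on_extend_assignment]
    by (simp add: case_prod_unfold parent_val_upd_below parent_val_upd_child mult_ac)
  also have "\<dots> = chain_sum F m (\<lambda>b. \<Sum>a\<in>{0, 1}. F (Suc m) b a * h a)"
    unfolding chain_sum_def sum.cartesian_product[symmetric]
    by (subst sum.swap) (simp add: sum_distrib_left distrib_left)
  finally show ?thesis .
qed

lemma chain_sum_cong:
  "(\<And>b. b \<in> {0, 1} \<Longrightarrow> h b = g b) \<Longrightarrow> chain_sum F m h = chain_sum F m g"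
  unfolding chain_sum_def by (rule sum.cong[OF refl]) (metis parent_val_last_in_01)

lemma chain_sum_affine:
  assumes "\<And>k b. k \<in> {1..m} \<Longrightarrow> b \<in> {0, 1} \<Longrightarrow> (\<Sum>a\<in>{0, 1}. F k b a) = 1"
    and "\<And>k b. k \<in> {1..m} \<Longrightarrow> b \<in> {0, 1} \<Longrightarrow> (\<Sum>a\<in>{0, 1}. F k b a * real a) = c k b"
  shows "chain_sum F m (\<lambda>a. p + q * real a)
       = p + q * (\<Sum>k=1..m. c k 0 * (\<Prod>l=k+1..m. c l 1 - c l 0))"
  using assms
proof (induction m arbitrary: p q)
  case 0
  show ?case by (simp add: chain_sum_0)
next
  case (Suc m)
  let ?D = "c (Suc m) 1 - c (Suc m) 0"
  have last: "Suc m \<in> {1..Suc m}" by simp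
  have "chain_sum F (Suc m) (\<lambda>a. p + q * real a)
      = chain_sum F m (\<lambda>b. (p + q * c (Suc m) 0) + (q * ?D) * real b)"
    unfolding chain_sum_Suc
  proof (rule chain_sum_cong)
    fix b :: nat
    assume b: "b \<in> {0, 1}"
    have "(\<Sum>a\<in>{0, 1}. F (Suc m) b a * (p + q * real a))
        = p * (\<Sum>a\<in>{0, 1}. F (Suc m) b a) + q * (\<Sum>a\<in>{0, 1}. F (Suc m) b a * real a)"
      by (simp add: algebra_simps)
    also have "\<dots> = p + q * c (Suc m) b"
      using Suc.prems(1)[OF last b] Suc.prems(2)[OF last b] by simp
    also have "\<dots> = (p + q * c (Suc m) 0) + (q * ?D) * real b"
      using b by (auto simp: algebra_simps)
    finally show "(\<Sum>a\<in>{0, 1}. F (Suc m) b a * (p + q * real a))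
        = (p + q * c (Suc m) 0) + (q * ?D) * real b" .
  qed
  also have "\<dots> = (p + q * c (Suc m) 0)
      + (q * ?D) * (\<Sum>k=1..m. c k 0 * (\<Prod>l=k+1..m. c l 1 - c l 0))"
    using Suc.IH Suc.prems by simp
  also have "\<dots> = p + q * (\<Sum>k=1..Suc m. c k 0 * (\<Prod>l=k+1..Suc m. c l 1 - c l 0))"
  proof -
    have "(\<Prod>l=k+1..Suc m. c l 1 - c l 0) = (\<Prod>l=k+1..m. c l 1 - c l 0) * ?D"
      if "k \<in> {1..m}" for k
    proof -
      from that have "{k+1..Suc m} = insert (Suc m) {k+1..m}" by auto
      then show ?thesis by (simp add: mult.commute)
    qed
    then have "(\<Sum>k=1..m. c k 0 * (\<Prod>l=k+1..Suc m. c l 1 - c l 0))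
        = (\<Sum>k=1..m. c k 0 * (\<Prod>l=k+1..m. c l 1 - c l 0)) * ?D"
      by (simp add: sum_distrib_right mult.assoc)
    then have "(\<Sum>k=1..Suc m. c k 0 * (\<Prod>l=k+1..Suc m. c l 1 - c l 0))
        = (\<Sum>k=1..m. c k 0 * (\<Prod>l=k+1..m. c l 1 - c l 0)) * ?D + c (Suc m) 0"
      by simp
    then show ?thesis by (simp only: distrib_left mult_ac add_ac)
  qed
  finally show ?case .
qed

definition tilted_kernel :: "(nat \<Rightarrow> nat \<Rightarrow> real) \<Rightarrow> nat \<Rightarrow> nat \<Rightarrow> nat \<Rightarrow> real" where
  "tilted_kernel mu i b a =
     (if a = 1 then mu i b else 1 - mu i b) * (1 + (real a - mu i b) / sig mu i b)"

lemma
  assumes "0 < mu i b" "mu i b < 1"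
  shows tilted_kernel_mass: "(\<Sum>a\<in>{0, 1}. tilted_kernel mu i b a) = 1"
    and tilted_kernel_mean: "(\<Sum>a\<in>{0, 1}. tilted_kernel mu i b a * real a) = mu i b + sig mu i b"
proof -
  have pos: "sig mu i b > 0" and sq: "sig mu i b * sig mu i b = mu i b * (1 - mu i b)"
    using assms by (simp_all add: sig_def real_sqrt_mult_self)
  show "(\<Sum>a\<in>{0, 1}. tilted_kernel mu i b a) = 1"
    using pos sq by (simp add: tilted_kernel_def field_simps)
  show "(\<Sum>a\<in>{0, 1}. tilted_kernel mu i b a * real a) = mu i b + sig mu i b"
    using pos sq by (simp add: tilted_kernel_def field_simps)
qed

lemma sum_phiS_Pow:
  "finite A \<Longrightarrow> (\<Sum>S\<in>Pow A. phiS mu S x) = (\<Prod>i\<in>A. phi mu i x + 1)"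
  by (simp add: prod_add phiS_def)

lemma chain_prob_mult_prod_one_plus_phi:
  "chain_prob n mu x * (\<Prod>i\<in>{1..n}. phi mu i x + 1)
     = (\<Prod>i\<in>{1..n}. tilted_kernel mu i (parent_val x i) (x i))"
  unfolding chain_prob_def prod.distrib[symmetric]
  by (rule prod.cong) (auto simp: tilted_kernel_def phi_def)

lemma sum_fourier_coeff_eq_chain_sum:
  assumes "n \<ge> 1"
  shows "(\<Sum>S\<in>Pow {1..n}. fourier_coeff n mu (\<lambda>x. real (x n)) S)
       = chain_sum (tilted_kernel mu) n real"
proof -
  have "(\<Sum>S\<in>Pow {1..n}. fourier_coeff n mu (\<lambda>x. real (x n)) S)
      = (\<Sum>x\<in>assignments n. chain_prob n mu x * (\<Prod>i\<in>{1..n}. phi mu i x + 1) * real (x n))"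
    unfolding fourier_coeff_def sum_phiS_Pow[OF finite_atLeastAtMost, symmetric]
    by (subst sum.swap) (simp add: sum_distrib_left mult_ac)
  also have "\<dots> = chain_sum (tilted_kernel mu) n real"
  proof -
    have "parent_val x (Suc n) = x n" for x
      using assms by (simp add: parent_val_def)
    then show ?thesis
      unfolding chain_sum_def chain_prob_mult_prod_one_plus_phi by simp
  qed
  finally show ?thesis .
qed

theorem mainTheorem11:
  fixes n :: nat and mu :: "nat \<Rightarrow> nat \<Rightarrow> real"
  assumes "n \<ge> 1"
    and "mu 1 0 = mu 1 1"
    and "\<And>i b. i \<in> {1..n} \<Longrightarrow> b \<in> {0, 1} \<Longrightarrow> 0 < mu i b \<and> mu i b < 1"
  shows "(\<Sum>S\<in>Pow {1..n}. fourier_coeff n mu (\<lambda>x. real (x n)) S)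
       = (\<Sum>k=1..n. (mu k 0 + sig mu k 0) *
            (\<Prod>l=k+1..n. (mu l 1 - mu l 0) + (sig mu l 1 - sig mu l 0)))"
proof -
  have "chain_sum (tilted_kernel mu) n (\<lambda>a. 0 + 1 * real a)
      = 0 + 1 * (\<Sum>k=1..n. (mu k 0 + sig mu k 0) *
            (\<Prod>l=k+1..n. (mu l 1 + sig mu l 1) - (mu l 0 + sig mu l 0)))"
    using assms(3) by (intro chain_sum_affine tilted_kernel_mass tilted_kernel_mean) blast+
  then show ?thesis
    using sum_fourier_coeff_eq_chain_sum[OF assms(1)] by (simp add: algebra_simps)
qed

end
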